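(* Let $\Omega\subsetneq\mathbb{C}$ be a simply connected domain. Then for every $s\in\mathbb{D}$ and every $w\in\Omega$, $$\mathscr{C}_{\Omega}^{\mathbb{D},s}(w)=\eta_\Omega(w)=\eta_\Omega^{\mathbb{D}}(w).$$
   Context: $\mathbb{D}=\{z\in\mathbb{C}:|z|<1\}$. For domains $\Omega\subset\mathbb{C}$, $Y\subsetneq\mathbb{C}$, and points $w\in\Omega$, $s\in Y$, let $\mathcal{H}^s_w(\Omega,Y)$ be the set of holomorphic maps $h:\Omega\to Y$ with $h(w)=s$ and $h(z)\neq s$ for all $z\in\Omega\setminus\{w\}$. For a domain $Y\subsetneq\mathbb{C}$ and $v\in Y$, the Hurwitz density is $\eta_Y(v)=2/r_Y(v)$, where $r_Y(v)=\max\{h'(0): h:\mathbb{D}\to Y \text{ holomorphic},\ h(0)=v,\ h(z)\neq v \text{ for } z\in\mathbb{D}\setminus\{0\},\ h'(0)>0\}$. The Carathéodory density of the Hurwitz metric is $\mathscr{C}_{\Omega}^{Y,s}(w)=\sup\{\eta_Y(h(w))|h'(w)| : h\in\mathcal{H}^s_w(\Omega,Y)\}$ (defined to be $0$ if the family is empty). The Kobayashi density of the Hurwitz metric of $\Omega$ relative to $Y$ is $\eta_\Omega^Y(w)=\inf \eta_Y(t)/|h'(t)|$, the infimum over all holomorphic $h:Y\to\Omega$ and $t\in Y$ with $h(t)=w$, $h(u)\neq w$ for all $u\in Y\setminus\{t\}$, and $h'(t)\neq0$. *)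

theory Defs
  imports "HOL-Complex_Analysis.Complex_Analysis"
begin

definition hurwitz_family :: "complex set \<Rightarrow> complex set \<Rightarrow> complex \<Rightarrow> complex \<Rightarrow> (complex \<Rightarrow> complex) set" where
  "hurwitz_family \<Omega> Y w s =
     {h. h holomorphic_on \<Omega> \<and> h ` \<Omega> \<subseteq> Y \<and> h w = s \<and> (\<forall>z\<in>\<Omega> - {w}. h z \<noteq> s)}"

definition hurwitz_radius :: "complex set \<Rightarrow> complex \<Rightarrow> real" where
  "hurwitz_radius Y v =
     Sup {r. r > 0 \<and> (\<exists>h\<in>hurwitz_family (ball 0 1) Y 0 v. deriv h 0 = complex_of_real r)}"

definition hurwitz_density :: "complex set \<Rightarrow> complex \<Rightarrow> real" where
  "hurwitz_density Y v = 2 / hurwitz_radius Y v"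

text \<open>Caratheodory density of the Hurwitz metric (0 if the family is empty; the supremum
  is taken in the extended reals so that an unbounded family gives infinity).\<close>
definition caratheodory_hurwitz :: "complex set \<Rightarrow> complex set \<Rightarrow> complex \<Rightarrow> complex \<Rightarrow> ereal" where
  "caratheodory_hurwitz \<Omega> Y s w =
     (if hurwitz_family \<Omega> Y w s = {} then 0
      else (SUP h\<in>hurwitz_family \<Omega> Y w s. ereal (hurwitz_density Y (h w) * cmod (deriv h w))))"

definition kobayashi_hurwitz :: "complex set \<Rightarrow> complex set \<Rightarrow> complex \<Rightarrow> real" where
  "kobayashi_hurwitz \<Omega> Y w =
     Inf {hurwitz_density Y t / cmod (deriv h t) | h t.
            h holomorphic_on Y \<and> h ` Y \<subseteq> \<Omega> \<and> t \<in> Y \<and> h t = w \<and>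
            (\<forall>u\<in>Y - {t}. h u \<noteq> w) \<and> deriv h t \<noteq> 0}"

end

theory Submission imports Defs begin

(* By the Riemann mapping theorem there is a conformal map f of the unit disc onto \<Omega> with
   f 0 = w and f'(0) = \<rho> > 0; let g be its inverse. All three quantities equal 2/\<rho>.
   The Schwarz lemma for g \<circ> h gives r_\<Omega>(w) = \<rho>. The Schwarz-Pick inequality for h \<circ> f bounds
   every member of the Caratheodory family by 2/\<rho>, with equality for the Moebius map
   sending 0 to s composed with g; for g \<circ> h it bounds every member of the Kobayashi family
   from below by 2/\<rho>, with equality for f itself. *)

definition disc_moebius :: "complex \<Rightarrow> complex \<Rightarrow> complex" where
  "disc_moebius a z = (z + a) / (1 + cnj a * z)"

lemma disc_moebius_eq_Moebius_function: "disc_moebius a = Moebius_function 0 (-a)"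
  by (rule ext) (simp add: disc_moebius_def Moebius_function_def)

lemma disc_moebius_denominator_nonzero:
  assumes "norm a < 1" "norm z < 1" shows "1 + cnj a * z \<noteq> 0"
proof
  assume "1 + cnj a * z = 0"
  then have "norm a * norm z = 1"
    by (metis add_eq_0_iff complex_mod_cnj norm_minus_cancel norm_mult norm_one)
  moreover have "norm a * norm z < 1"
    using assms by (metis mult_strict_mono' norm_ge_zero mult_1_left)
  ultimately show False by simp
qed

lemma disc_moebius_in_ball: "norm a < 1 \<Longrightarrow> norm z < 1 \<Longrightarrow> norm (disc_moebius a z) < 1"
  unfolding disc_moebius_eq_Moebius_function by (rule Moebius_function_norm_lt_1) auto

lemma disc_moebius_inverse: "norm a < 1 \<Longrightarrow> norm z < 1 \<Longrightarrow> disc_moebius (-a) (disc_moebius a z) = z"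
  unfolding disc_moebius_eq_Moebius_function by (rule Moebius_function_compose) auto

lemma disc_moebius_zero [simp]: "disc_moebius a 0 = a"
  by (simp add: disc_moebius_def)

lemma disc_moebius_minus_self [simp]: "disc_moebius (-a) a = 0"
  by (simp add: disc_moebius_def)

lemma holomorphic_on_disc_moebius: "norm a < 1 \<Longrightarrow> disc_moebius a holomorphic_on ball 0 1"
  unfolding disc_moebius_eq_Moebius_function by (rule Moebius_function_holomorphic) auto

lemma has_field_derivative_disc_moebius:
  assumes "norm a < 1" "norm z < 1"
  shows "(disc_moebius a has_field_derivative (1 - cnj a * a) / (1 + cnj a * z)\<^sup>2) (at z)"
proof -
  have d: "1 + cnj a * z \<noteq> 0"
    using disc_moebius_denominator_nonzero assms by blast
  have "((\<lambda>z. (z + a) / (1 + cnj a * z)) has_field_derivative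
          (1 - cnj a * a) / (1 + cnj a * z)\<^sup>2) (at z)"
    by (rule derivative_eq_intros refl | simp add: d)+ (simp add: field_simps power2_eq_square d)
  then show ?thesis
    unfolding disc_moebius_def[abs_def] .
qed

lemma cnj_mult_self: "cnj a * a = complex_of_real ((norm a)\<^sup>2)"
  by (metis complex_norm_square mult.commute)

lemma deriv_disc_moebius_zero:
  "norm a < 1 \<Longrightarrow> deriv (disc_moebius a) 0 = complex_of_real (1 - (norm a)\<^sup>2)"
  using has_field_derivative_disc_moebius[of a 0] by (simp add: DERIV_imp_deriv cnj_mult_self)

lemma deriv_disc_moebius_minus_self:
  assumes "norm a < 1"
  shows "deriv (disc_moebius (-a)) a = complex_of_real (1 / (1 - (norm a)\<^sup>2))"
proof -
  have "deriv (disc_moebius (-a)) a = (1 - cnj a * a) / (1 - cnj a * a)\<^sup>2"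
    using has_field_derivative_disc_moebius[of "-a" a] assms by (simp add: DERIV_imp_deriv)
  also have "\<dots> = 1 / (1 - cnj a * a)"
    using assms by (simp add: power2_eq_square cnj_mult_self)
  finally show ?thesis
    by (simp add: cnj_mult_self)
qed

lemma deriv_compose_holomorphic:
  assumes "f holomorphic_on A" "open A" "x \<in> A" "g holomorphic_on B" "open B" "f x \<in> B"
  shows "deriv (g \<circ> f) x = deriv g (f x) * deriv f x"
  using assms by (intro deriv_chain holomorphic_on_imp_differentiable_at)

lemma deriv_left_inverse_holomorphic:
  assumes "open A" "open B" "f holomorphic_on A" "g holomorphic_on B"
    and "\<forall>z\<in>A. f z \<in> B \<and> g (f z) = z" "x \<in> A"
  shows "deriv g (f x) * deriv f x = 1"
proof -
  have "((g \<circ> f) has_field_derivative deriv g (f x) * deriv f x) (at x)"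
    using assms by (intro DERIV_chain holomorphic_derivI[of g B] holomorphic_derivI[of f A]) auto
  moreover have "((g \<circ> f) has_field_derivative 1) (at x)"
    by (rule has_field_derivative_transform_within_open[OF DERIV_ident \<open>open A\<close> \<open>x \<in> A\<close>])
       (use assms in auto)
  ultimately show ?thesis
    by (rule DERIV_unique)
qed

lemma Schwarz_Pick_deriv:
  assumes holk: "k holomorphic_on ball 0 1" and kin: "k ` ball 0 1 \<subseteq> ball 0 1" and a: "norm a < 1"
  shows "norm (deriv k a) * (1 - (norm a)\<^sup>2) \<le> 1 - (norm (k a))\<^sup>2"
proof -
  define b where "b = k a"
  have b: "norm b < 1"
    using kin a unfolding b_def by (auto simp: subset_iff)
  have holka: "(k \<circ> disc_moebius a) holomorphic_on ball 0 1"
    using a kin by (intro holomorphic_on_compose_gen[OF holomorphic_on_disc_moebius holk])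
                   (auto simp: disc_moebius_in_ball)
  define F where "F = disc_moebius (-b) \<circ> (k \<circ> disc_moebius a)"
  have holF: "F holomorphic_on ball 0 1"
    unfolding F_def using b kin a
    by (intro holomorphic_on_compose_gen[OF holka holomorphic_on_disc_moebius])
       (auto simp: disc_moebius_in_ball)
  have F0: "F 0 = 0"
    by (simp add: F_def b_def)
  have Fin: "norm (F z) < 1" if "norm z < 1" for z
  proof -
    have "norm (k (disc_moebius a z)) < 1"
      using kin that a disc_moebius_in_ball[of a z] by (auto simp: subset_iff)
    then show ?thesis
      unfolding F_def using b by (simp add: disc_moebius_in_ball)
  qed
  have "deriv F 0 = deriv (disc_moebius (-b)) b * (deriv k a * deriv (disc_moebius a) 0)"
    unfolding F_def using a b kin
    by (simp add: deriv_compose_holomorphic[OF holka _ _ holomorphic_on_disc_moebius]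
                  deriv_compose_holomorphic[OF holomorphic_on_disc_moebius _ _ holk] b_def)
  moreover have "0 < 1 - (norm a)\<^sup>2" "0 < 1 - (norm b)\<^sup>2"
    using a b by (simp_all add: power_less_one_iff)
  ultimately have "norm (deriv k a) * (1 - (norm a)\<^sup>2) / (1 - (norm b)\<^sup>2) \<le> 1"
    using Schwarz_Lemma(2)[OF holF F0 Fin, of 0] a b
    by (simp add: deriv_disc_moebius_minus_self deriv_disc_moebius_zero norm_mult norm_divide
             del: of_real_diff of_real_power)
  with \<open>0 < 1 - (norm b)\<^sup>2\<close> show ?thesis
    by (simp add: b_def divide_le_eq)
qed

locale Riemann_map =
  fixes Y :: "complex set" and f g :: "complex \<Rightarrow> complex" and \<rho> :: real
  assumes open_range: "open Y"
    and holomorphic_map: "f holomorphic_on ball 0 1"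
    and holomorphic_inverse: "g holomorphic_on Y"
    and map_inverse: "\<forall>z\<in>ball 0 1. f z \<in> Y \<and> g (f z) = z"
    and inverse_map: "\<forall>z\<in>Y. g z \<in> ball 0 1 \<and> f (g z) = z"
    and deriv_map_zero: "deriv f 0 = complex_of_real \<rho>"
    and deriv_pos: "\<rho> > 0"
begin

lemma map_image: "f ` ball 0 1 \<subseteq> Y"
  using map_inverse by auto

lemma inverse_image: "g ` Y \<subseteq> ball 0 1"
  using inverse_map by auto

lemma center_in_range [simp]: "f 0 \<in> Y"
  using map_inverse by simp

lemma inverse_center [simp]: "g (f 0) = 0"
  using map_inverse by simp

lemma deriv_inverse_center: "deriv g (f 0) = complex_of_real (1 / \<rho>)"
proof -
  have "deriv g (f 0) * complex_of_real \<rho> = 1"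
    using deriv_left_inverse_holomorphic[OF _ open_range holomorphic_map holomorphic_inverse
          map_inverse, of 0] deriv_map_zero by simp
  then show ?thesis
    using deriv_pos by (simp add: field_simps)
qed

lemma map_in_hurwitz_family: "f \<in> hurwitz_family (ball 0 1) Y 0 (f 0)"
proof -
  have "f z \<noteq> f 0" if "z \<in> ball 0 1 - {0}" for z
    using that map_inverse by (metis DiffE inverse_center singletonI)
  then show ?thesis
    unfolding hurwitz_family_def using holomorphic_map map_image by blast
qed

lemma norm_deriv_hurwitz_family_le:
  assumes "h \<in> hurwitz_family (ball 0 1) Y 0 (f 0)"
  shows "norm (deriv h 0) \<le> \<rho>"
proof -
  from assms have holh: "h holomorphic_on ball 0 1" and hin: "h ` ball 0 1 \<subseteq> Y"
    and h0: "h 0 = f 0"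
    unfolding hurwitz_family_def by auto
  have holgh: "(g \<circ> h) holomorphic_on ball 0 1"
    by (rule holomorphic_on_compose_gen[OF holh holomorphic_inverse hin])
  have "norm z < 1 \<Longrightarrow> norm ((g \<circ> h) z) < 1" for z
    using hin inverse_image by (auto simp: subset_iff)
  then have "norm (deriv (g \<circ> h) 0) \<le> 1"
    using Schwarz_Lemma(2)[OF holgh _ _, of 0] h0 by simp
  moreover have "deriv (g \<circ> h) 0 = deriv g (f 0) * deriv h 0"
    using hin h0 by (subst deriv_compose_holomorphic[OF holh _ _ holomorphic_inverse open_range]) auto
  ultimately show ?thesis
    using deriv_pos by (simp add: deriv_inverse_center norm_divide divide_le_eq)
qed

lemma hurwitz_radius_center: "hurwitz_radius Y (f 0) = \<rho>"
  unfolding hurwitz_radius_def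
proof (rule cSup_eq_maximum)
  show "\<rho> \<in> {r. r > 0 \<and> (\<exists>h\<in>hurwitz_family (ball 0 1) Y 0 (f 0). deriv h 0 = complex_of_real r)}"
    using map_in_hurwitz_family deriv_map_zero deriv_pos by blast
next
  fix r
  assume "r \<in> {r. r > 0 \<and> (\<exists>h\<in>hurwitz_family (ball 0 1) Y 0 (f 0). deriv h 0 = complex_of_real r)}"
  then show "r \<le> \<rho>"
    using norm_deriv_hurwitz_family_le by fastforce
qed

lemma hurwitz_density_center: "hurwitz_density Y (f 0) = 2 / \<rho>"
  by (simp add: hurwitz_density_def hurwitz_radius_center)

end

lemma Riemann_map_disc_moebius:
  assumes "norm a < 1"
  shows "Riemann_map (ball 0 1) (disc_moebius a) (disc_moebius (-a)) (1 - (norm a)\<^sup>2)"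
  using assms disc_moebius_inverse[of "-a"]
  by unfold_locales
     (simp_all add: holomorphic_on_disc_moebius disc_moebius_in_ball disc_moebius_inverse
                    deriv_disc_moebius_zero power_less_one_iff)

lemma hurwitz_density_disc: "norm v < 1 \<Longrightarrow> hurwitz_density (ball 0 1) v = 2 / (1 - (norm v)\<^sup>2)"
  using Riemann_map.hurwitz_density_center[OF Riemann_map_disc_moebius] by simp

context Riemann_map
begin

lemma caratheodory_member_le:
  assumes holh: "h holomorphic_on Y" and hin: "h ` Y \<subseteq> ball 0 1"
  shows "hurwitz_density (ball 0 1) (h (f 0)) * norm (deriv h (f 0)) \<le> 2 / \<rho>"
proof -
  have holhf: "(h \<circ> f) holomorphic_on ball 0 1"
    by (rule holomorphic_on_compose_gen[OF holomorphic_map holh map_image])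
  have "(h \<circ> f) ` ball 0 1 \<subseteq> ball 0 1"
    using map_image hin by auto
  from Schwarz_Pick_deriv[OF holhf this, of 0]
  have "norm (deriv h (f 0)) * \<rho> \<le> 1 - (norm (h (f 0)))\<^sup>2"
    using deriv_pos
    by (simp add: deriv_compose_holomorphic[OF holomorphic_map _ _ holh open_range]
                  deriv_map_zero norm_mult)
  moreover have "norm (h (f 0)) < 1"
    using hin by (auto simp: image_subset_iff)
  ultimately show ?thesis
    using deriv_pos
    by (simp add: hurwitz_density_disc power_less_one_iff field_simps)
qed

lemma moebius_inverse_in_hurwitz_family:
  assumes "norm s < 1"
  shows "disc_moebius s \<circ> g \<in> hurwitz_family Y (ball 0 1) (f 0) s"
  unfolding hurwitz_family_def
proof (intro CollectI conjI ballI)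
  show "(disc_moebius s \<circ> g) holomorphic_on Y"
    using assms by (intro holomorphic_on_compose_gen[OF holomorphic_inverse
                          holomorphic_on_disc_moebius inverse_image])
  show "(disc_moebius s \<circ> g) ` Y \<subseteq> ball 0 1"
    using inverse_map assms by (auto simp: disc_moebius_in_ball)
  show "(disc_moebius s \<circ> g) (f 0) = s"
    by simp
  fix z assume z: "z \<in> Y - {f 0}"
  show "(disc_moebius s \<circ> g) z \<noteq> s"
  proof
    assume "(disc_moebius s \<circ> g) z = s"
    then have "g z = 0"
      using inverse_map z assms disc_moebius_inverse[of s "g z"] by auto
    then show False
      using inverse_map z by force
  qed
qed

lemma caratheodory_member_moebius_inverse:
  assumes s: "norm s < 1"
  shows "hurwitz_density (ball 0 1) ((disc_moebius s \<circ> g) (f 0))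
           * norm (deriv (disc_moebius s \<circ> g) (f 0)) = 2 / \<rho>"
proof -
  have "deriv (disc_moebius s \<circ> g) (f 0) = complex_of_real ((1 - (norm s)\<^sup>2) / \<rho>)"
    using s inverse_image
    by (simp add: deriv_compose_holomorphic[OF holomorphic_inverse open_range _
                    holomorphic_on_disc_moebius] deriv_disc_moebius_zero deriv_inverse_center)
  moreover have "0 < 1 - (norm s)\<^sup>2"
    using s by (simp add: power_less_one_iff)
  ultimately show ?thesis
    using s deriv_pos
    by (simp add: hurwitz_density_disc field_simps del: of_real_diff of_real_power of_real_divide)
qed

lemma caratheodory_hurwitz_center:
  assumes "norm s < 1"
  shows "caratheodory_hurwitz Y (ball 0 1) s (f 0) = ereal (2 / \<rho>)"
proof -
  let ?F = "hurwitz_family Y (ball 0 1) (f 0) s"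
  have "(SUP h\<in>?F. ereal (hurwitz_density (ball 0 1) (h (f 0)) * norm (deriv h (f 0))))
          = ereal (2 / \<rho>)"
  proof (rule antisym)
    show "(SUP h\<in>?F. ereal (hurwitz_density (ball 0 1) (h (f 0)) * norm (deriv h (f 0))))
            \<le> ereal (2 / \<rho>)"
      using caratheodory_member_le by (intro SUP_least) (auto simp: hurwitz_family_def)
    show "ereal (2 / \<rho>)
            \<le> (SUP h\<in>?F. ereal (hurwitz_density (ball 0 1) (h (f 0)) * norm (deriv h (f 0))))"
      using assms moebius_inverse_in_hurwitz_family caratheodory_member_moebius_inverse
      by (intro SUP_upper2[of "disc_moebius s \<circ> g"]) auto
  qed
  then show ?thesis
    using moebius_inverse_in_hurwitz_family[OF assms]
    unfolding caratheodory_hurwitz_def by auto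
qed

lemma kobayashi_member_ge:
  assumes holh: "h holomorphic_on ball 0 1" and hin: "h ` ball 0 1 \<subseteq> Y"
    and t: "t \<in> ball 0 1" and ht: "h t = f 0" and dh: "deriv h t \<noteq> 0"
  shows "2 / \<rho> \<le> hurwitz_density (ball 0 1) t / norm (deriv h t)"
proof -
  have holgh: "(g \<circ> h) holomorphic_on ball 0 1"
    by (rule holomorphic_on_compose_gen[OF holh holomorphic_inverse hin])
  have "(g \<circ> h) ` ball 0 1 \<subseteq> ball 0 1"
    using hin inverse_image by auto
  from Schwarz_Pick_deriv[OF holgh this, of t]
  have "norm (deriv h t) * (1 - (norm t)\<^sup>2) \<le> \<rho>"
    using t ht hin deriv_pos
    by (simp add: deriv_compose_holomorphic[OF holh _ _ holomorphic_inverse open_range]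
                  deriv_inverse_center norm_mult norm_divide divide_le_eq image_subset_iff)
  moreover have "0 < 1 - (norm t)\<^sup>2"
    using t by (simp add: power_less_one_iff)
  ultimately show ?thesis
    using t dh deriv_pos
    by (simp add: hurwitz_density_disc divide_simps mult.commute)
qed

lemma kobayashi_hurwitz_center: "kobayashi_hurwitz Y (ball 0 1) (f 0) = 2 / \<rho>"
  unfolding kobayashi_hurwitz_def
proof (rule cInf_eq_minimum)
  have "hurwitz_density (ball 0 1) 0 / norm (deriv f 0) = 2 / \<rho>"
    using deriv_pos by (simp add: hurwitz_density_disc deriv_map_zero)
  then show "2 / \<rho> \<in> {hurwitz_density (ball 0 1) t / norm (deriv h t) | h t.
            h holomorphic_on ball 0 1 \<and> h ` ball 0 1 \<subseteq> Y \<and> t \<in> ball 0 1 \<and> h t = f 0 \<and>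
            (\<forall>u\<in>ball 0 1 - {t}. h u \<noteq> f 0) \<and> deriv h t \<noteq> 0}"
    using map_in_hurwitz_family deriv_map_zero deriv_pos
    unfolding hurwitz_family_def by (intro CollectI exI[of _ f] exI[of _ 0]) auto
qed (use kobayashi_member_ge in blast)

end

lemma biholomorphic_disc_centered:
  assumes "open \<Omega>" "simply_connected \<Omega>" "\<Omega> \<noteq> UNIV" "w \<in> \<Omega>"
  obtains f g where "f holomorphic_on ball 0 1" "g holomorphic_on \<Omega>"
    "\<forall>z\<in>ball 0 1. f z \<in> \<Omega> \<and> g (f z) = z" "\<forall>z\<in>\<Omega>. g z \<in> ball 0 1 \<and> f (g z) = z"
    "f 0 = w"
proof -
  obtain f0 g0 where holf0: "f0 holomorphic_on \<Omega>" and holg0: "g0 holomorphic_on ball 0 1"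
    and f0g0: "\<forall>z\<in>\<Omega>. f0 z \<in> ball 0 1 \<and> g0 (f0 z) = z"
    and g0f0: "\<forall>z\<in>ball 0 1. g0 z \<in> \<Omega> \<and> f0 (g0 z) = z"
    using Riemann_mapping_theorem[of \<Omega>] assms by blast
  define a where "a = f0 w"
  have a: "norm a < 1"
    using f0g0 assms(4) by (auto simp: a_def)
  show ?thesis
  proof
    show "(g0 \<circ> disc_moebius a) holomorphic_on ball 0 1"
      using a by (intro holomorphic_on_compose_gen[OF holomorphic_on_disc_moebius holg0])
                 (auto simp: disc_moebius_in_ball)
    show "(disc_moebius (-a) \<circ> f0) holomorphic_on \<Omega>"
      using a f0g0 by (intro holomorphic_on_compose_gen[OF holf0 holomorphic_on_disc_moebius]) auto
    show "\<forall>z\<in>ball 0 1. (g0 \<circ> disc_moebius a) z \<in> \<Omega> \<and>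
            (disc_moebius (-a) \<circ> f0) ((g0 \<circ> disc_moebius a) z) = z"
      using a g0f0 by (auto simp: disc_moebius_in_ball disc_moebius_inverse)
    show "\<forall>z\<in>\<Omega>. (disc_moebius (-a) \<circ> f0) z \<in> ball 0 1 \<and>
            (g0 \<circ> disc_moebius a) ((disc_moebius (-a) \<circ> f0) z) = z"
      using a f0g0 disc_moebius_inverse[of "-a"] by (auto simp: disc_moebius_in_ball)
    show "(g0 \<circ> disc_moebius a) 0 = w"
      using f0g0 assms(4) by (simp add: a_def)
  qed
qed

lemma Riemann_map_rotation:
  assumes Y: "open Y" and holf: "f holomorphic_on ball 0 1" and holg: "g holomorphic_on Y"
    and fg: "\<forall>z\<in>ball 0 1. f z \<in> Y \<and> g (f z) = z" and gf: "\<forall>z\<in>Y. g z \<in> ball 0 1 \<and> f (g z) = z"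
  defines "u \<equiv> cnj (sgn (deriv f 0))"
  shows "Riemann_map Y (\<lambda>z. f (u * z)) (\<lambda>z. cnj u * g z) (norm (deriv f 0))"
proof -
  have "deriv g (f 0) * deriv f 0 = 1"
    using deriv_left_inverse_holomorphic[OF _ Y holf holg fg, of 0] by simp
  then have c: "deriv f 0 \<noteq> 0"
    by auto
  have nu: "norm u = 1"
    using c by (simp add: u_def norm_sgn)
  have uu: "cnj u * u = 1"
    using nu by (simp add: cnj_mult_self)
  have rot: "u * z \<in> ball 0 1" "cnj u * z \<in> ball 0 1" if "z \<in> ball 0 1" for z
    using that nu by (simp_all add: norm_mult)
  show ?thesis
  proof
    show "(\<lambda>z. f (u * z)) holomorphic_on ball 0 1"
      using rot by (intro holomorphic_on_compose_gen[of "\<lambda>z. u * z" "ball 0 1" f "ball 0 1",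
                           unfolded o_def] holomorphic_intros holf) auto
    show "(\<lambda>z. cnj u * g z) holomorphic_on Y"
      by (intro holomorphic_intros holg)
    show "\<forall>z\<in>ball 0 1. f (u * z) \<in> Y \<and> cnj u * g (f (u * z)) = z"
      using fg rot uu by (simp add: mult.assoc[symmetric])
    show "\<forall>z\<in>Y. cnj u * g z \<in> ball 0 1 \<and> f (u * (cnj u * g z)) = z"
      using gf rot uu by (simp add: mult.assoc[symmetric] mult.commute[of u])
    have "deriv (\<lambda>z. f (u * z)) 0 = u * deriv f 0"
      by (simp add: deriv_compose_linear holomorphic_on_imp_differentiable_at[OF holf])
    also have "\<dots> = complex_of_real (norm (deriv f 0))"
      using c by (simp add: u_def complex_sgn_def scaleR_conv_of_real field_simps
                          complex_norm_square[symmetric] power2_eq_square)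
    finally show "deriv (\<lambda>z. f (u * z)) 0 = complex_of_real (norm (deriv f 0))" .
    show "norm (deriv f 0) > 0"
      using c by simp
  qed (fact Y)
qed

lemma Riemann_map_exists:
  assumes "open \<Omega>" "simply_connected \<Omega>" "\<Omega> \<noteq> UNIV" "w \<in> \<Omega>"
  obtains f g \<rho> where "Riemann_map \<Omega> f g \<rho>" "f 0 = w"
proof -
  obtain f g where biholo: "f holomorphic_on ball 0 1" "g holomorphic_on \<Omega>"
    "\<forall>z\<in>ball 0 1. f z \<in> \<Omega> \<and> g (f z) = z" "\<forall>z\<in>\<Omega>. g z \<in> ball 0 1 \<and> f (g z) = z"
    and "f 0 = w"
    using biholomorphic_disc_centered[OF assms] by blast
  show ?thesis
    by (rule that[OF Riemann_map_rotation[OF \<open>open \<Omega>\<close> biholo]]) (simp add: \<open>f 0 = w\<close>)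
qed

theorem proposition3p5:
  fixes \<Omega> :: "complex set" and s w :: complex
  assumes "open \<Omega>" and "connected \<Omega>" and "simply_connected \<Omega>" and "\<Omega> \<noteq> UNIV"
    and "s \<in> ball 0 1" and "w \<in> \<Omega>"
  shows "caratheodory_hurwitz \<Omega> (ball 0 1) s w = ereal (hurwitz_density \<Omega> w)
       \<and> hurwitz_density \<Omega> w = kobayashi_hurwitz \<Omega> (ball 0 1) w"
proof -
  obtain f g \<rho> where "Riemann_map \<Omega> f g \<rho>" and "f 0 = w"
    using Riemann_map_exists[OF assms(1,3,4,6)] .
  then interpret Riemann_map \<Omega> f g \<rho> by simp
  show ?thesis
    using caratheodory_hurwitz_center[of s] kobayashi_hurwitz_center hurwitz_density_center
      \<open>s \<in> ball 0 1\<close> \<open>f 0 = w\<close> by simp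
qed

end
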